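(* Let $f\in\mathbf Q[X]$ be a separable polynomial of degree $2n$. (i) If $f$ is reciprocal, i.e. $f(X)=X^{2n}f(X^{-1})$, then the discriminant of $f$ is a square in $\mathbf Q$ if and only if $(-1)^nf(1)f(-1)$ is a square in $\mathbf Q$. (ii) If $f$ is skew-reciprocal, i.e. $f(X)=(-1)^{2n(2n-1)/2}X^{2n}f(-X^{-1})$, then the discriminant of $f$ is a square in $\mathbf Q$ if and only if $f(\mathrm i)f(-\mathrm i)$ (which is rational) is a square in $\mathbf Q$, where $\mathrm i\in\mathbf C$ is the imaginary unit. *)

theory Defs
  imports Complex_Main "HOL-Computational_Algebra.Polynomial" "Subresultants.Resultant_Prelim"
begin

definition discriminant :: "'a :: field poly \<Rightarrow> 'a" where
  "discriminant f = (let d = degree f in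
     (-1) ^ (d * (d - 1) div 2) * resultant f (pderiv f) / lead_coeff f)"

definition separable_poly :: "'a :: field poly \<Rightarrow> bool" where
  "separable_poly f \<longleftrightarrow> coprime f (pderiv f)"

definition is_rat_square :: "rat \<Rightarrow> bool" where
  "is_rat_square a \<longleftrightarrow> (\<exists>q::rat. a = q ^ 2)"

end

theory Submission
  imports Defs "Subresultants.Subresultant_Gcd"
    "HOL-Computational_Algebra.Fundamental_Theorem_Algebra"
    "HOL-Computational_Algebra.Field_as_Ring"
begin

(* Let u = 1 (reciprocal case) or u = -1 (skew-reciprocal case), so that the symmetry reads
   f(X) = u^n X^(2n) f(u/X).  Then f(X) = X^n g(X + u/X) for a polynomial g of degree n, and the
   roots of f come in pairs a, u/a lying over the roots b = a + u/a of g.  At such a pair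
   f'(a) f'(u/a) = u^(n+1) g'(b)^2 (4u - b^2).  Writing both discriminants as products over roots
   gives, for s^2 = u,
     disc f = g(2s) g(-2s) (disc g)^2,
   so disc f is a rational square iff g(2s) g(-2s) is.  For u = 1 this number is
   (-1)^n f(1) f(-1); for u = -1 (s = i) it is f(i) f(-i). *)

lemma minus_one_power_triangular:
  "((-1) :: 'a :: comm_ring_1) ^ (2 * n * (2 * n - 1) div 2) = (-1) ^ n"
proof -
  have "2 * n * (2 * n - 1) div 2 = n * (2 * n - 1)" by simp
  moreover have "even (n * (2 * n - 1)) \<longleftrightarrow> even n" by (cases n) simp_all
  ultimately show ?thesis by (metis minus_one_power_iff)
qed

lemma discriminant_power2:
  "discriminant f ^ 2 = (resultant f (pderiv f) / lead_coeff f) ^ 2"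
proof -
  have "((-1 :: 'a) ^ k) ^ 2 = 1" for k
    by (simp add: power2_eq_square flip: power_mult_distrib)
  then show ?thesis
    by (simp add: discriminant_def Let_def power_mult_distrib power_divide)
qed

lemma separable_poly_discriminant_nonzero:
  fixes f :: "'a :: field_gcd poly"
  assumes "separable_poly f"
  shows "discriminant f \<noteq> 0"
proof -
  have "coprime f (pderiv f)" using assms by (simp add: separable_poly_def)
  then have "f \<noteq> 0" and "gcd f (pderiv f) = 1"
    by (auto simp: coprime_iff_gcd_eq_1)
  then show ?thesis
    using resultant_0_gcd[of f "pderiv f"] by (simp add: discriminant_def Let_def)
qed

lemma (in field_hom) discriminant_map_poly:
  "discriminant (map_poly hom f) = hom (discriminant f)"
  by (simp add: discriminant_def Let_def resultant_hom[symmetric] hom_distribs)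

lemma resultant_mod:
  fixes F G :: "'a :: field poly"
  assumes F: "F \<noteq> 0" and dfg: "degree G \<le> degree F" and dg: "degree G > 0"
  shows "resultant F G =
    (-1) ^ (degree F * degree G) * lead_coeff G ^ (degree F - degree (F mod G)) * resultant G (F mod G)"
proof -
  define H where "H = F mod G"
  have G: "G \<noteq> 0" using dg by auto
  have FGH: "F + (- (F div G)) * G = H"
    unfolding H_def using div_mult_mod_eq[of F G] by (simp add: algebra_simps)
  have H_small: "degree G > degree H \<or> H = 0 \<and> F \<noteq> 0 \<and> G \<noteq> 0"
    using degree_mod_less'[OF G, of F] F G unfolding H_def by auto
  show ?thesis
  proof (cases "degree H = 0")
    case True
    have "subresultant (degree H) F G = smult ((-1) ^ ((degree F - degree H) * (degree G - degree H))
       * lead_coeff G ^ (degree F - degree H) * lead_coeff H ^ (degree G - degree H - 1)) H"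
      by (rule BT_lemma_1_13[OF FGH dfg H_small]) (use dg in auto)
    then have "[:resultant F G:] = smult ((-1) ^ (degree F * degree G)
       * lead_coeff G ^ degree F * lead_coeff H ^ (degree G - 1)) H"
      using True by (simp add: subresultant_resultant)
    from arg_cong[OF this, of "\<lambda>x. coeff x 0"]
    have R: "resultant F G = (-1) ^ (degree F * degree G)
       * lead_coeff G ^ degree F * lead_coeff H ^ (degree G - 1) * coeff H 0" by simp
    from True obtain h where h: "H = [:h:]" by (metis degree_eq_zeroE)
    have "h ^ (degree G - 1) * h = h ^ degree G"
      using dg by (metis Suc_diff_1 power_Suc2)
    then show ?thesis
      using R h True unfolding H_def[symmetric] by (simp add: mult_ac)
  next
    case False
    have "subresultant 0 F G = smult ((-1) ^ ((degree F - 0) * (degree G - 0))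
       * lead_coeff G ^ (degree F - degree H)) (subresultant 0 G H)"
      by (rule BT_lemma_1_12[OF FGH dfg H_small]) (use False in auto)
    from arg_cong[OF this, of "\<lambda>x. coeff x 0"]
    show ?thesis
      unfolding H_def[symmetric] by (simp add: subresultant_resultant)
  qed
qed

lemma poly_eqI_nonzero:
  fixes p q :: "'a :: field_char_0 poly"
  assumes "\<And>x. x \<noteq> 0 \<Longrightarrow> poly p x = poly q x"
  shows "p = q"
proof (rule ccontr)
  assume "p \<noteq> q"
  then have "finite {x. poly (p - q) x = 0}" by (intro poly_roots_finite) simp
  moreover have "UNIV - {0} \<subseteq> {x. poly (p - q) x = 0}" using assms by auto
  ultimately have "finite (UNIV :: 'a set)" by (metis finite_Diff2 finite.emptyI finite_insert finite_subset)
  then show False using infinite_UNIV_char_0 by blast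
qed

section \<open>Resultants as products over complex roots\<close>

definition root_resultant :: "complex poly \<Rightarrow> complex poly \<Rightarrow> complex" where
  "root_resultant p q = lead_coeff p ^ degree q * (\<Prod>a\<in>#proots p. poly q a)"

lemma poly_eq_lead_coeff_prod_proots:
  fixes p :: "complex poly"
  shows "poly p x = lead_coeff p * (\<Prod>a\<in>#proots p. x - a)"
proof -
  have "poly p x = poly (smult (lead_coeff p) (\<Prod>a\<in>#proots p. [:-a, 1:])) x"
    by (simp only: complex_poly_decompose_multiset)
  then show ?thesis
    by (simp add: poly_prod_mset)
qed

lemma root_resultant_eq_prod_diff:
  "root_resultant p q =
     lead_coeff p ^ degree q * lead_coeff q ^ degree p * (\<Prod>a\<in>#proots p. \<Prod>b\<in>#proots q. a - b)"
  unfolding root_resultant_def poly_eq_lead_coeff_prod_proots[of q]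
  by (simp add: prod_mset.distrib prod_mset_constant size_proots_complex)

lemma root_resultant_swap:
  "root_resultant p q = (-1) ^ (degree p * degree q) * root_resultant q p"
proof -
  have flip: "(\<Prod>b\<in>#proots q. a - b) = (-1) ^ degree q * (\<Prod>b\<in>#proots q. b - a)" for a
  proof -
    have "(\<Prod>b\<in>#proots q. a - b) = (\<Prod>b\<in>#proots q. (-1) * (b - a))"
      by simp
    then show ?thesis
      by (simp only: prod_mset.distrib prod_mset_constant size_proots_complex)
  qed
  have "(\<Prod>a\<in>#proots p. \<Prod>b\<in>#proots q. a - b) =
      ((-1) ^ degree q) ^ degree p * (\<Prod>a\<in>#proots p. \<Prod>b\<in>#proots q. b - a)"
    by (simp only: flip prod_mset.distrib prod_mset_constant size_proots_complex)
  also have "(\<Prod>a\<in>#proots p. \<Prod>b\<in>#proots q. b - a) =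
      (\<Prod>b\<in>#proots q. \<Prod>a\<in>#proots p. b - a)"
    by (rule prod_mset.swap)
  finally show ?thesis
    unfolding root_resultant_eq_prod_diff by (simp add: power_mult[symmetric] mult_ac)
qed

lemma root_resultant_mod:
  assumes "G \<noteq> 0"
  shows "root_resultant G F * lead_coeff G ^ degree (F mod G) =
    lead_coeff G ^ degree F * root_resultant G (F mod G)"
proof -
  have "poly F b = poly (F mod G) b" if "b \<in># proots G" for b
  proof -
    have "poly G b = 0" using that assms by simp
    then show ?thesis
      by (metis add_0 div_mult_mod_eq mult_zero_right poly_add poly_mult)
  qed
  then have "(\<Prod>b\<in>#proots G. poly F b) = (\<Prod>b\<in>#proots G. poly (F mod G) b)"
    by (metis image_mset_cong)
  then show ?thesis
    unfolding root_resultant_def by (simp add: mult_ac)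
qed

lemma resultant_eq_root_resultant_of_degree_le:
  fixes p q :: "complex poly"
  assumes "p \<noteq> 0" "degree q \<le> degree p"
  shows "resultant p q = root_resultant p q"
  using assms
proof (induction "degree q" arbitrary: p q rule: less_induct)
  case less
  show ?case
  proof (cases "degree q = 0")
    case True
    then obtain c where "q = [:c:]" by (metis degree_eq_zeroE)
    then show ?thesis
      by (simp add: root_resultant_def prod_mset_constant size_proots_complex)
  next
    case False
    define r where "r = p mod q"
    have q: "q \<noteq> 0" using False by auto
    have r: "r = 0 \<or> degree r < degree q"
      using degree_mod_less'[OF q, of p] unfolding r_def by auto
    have IH: "resultant q r = root_resultant q r"
    proof (cases "r = 0")
      case True
      then show ?thesis
        using False by (simp add: root_resultant_def prod_mset_constant size_proots_complex)
    next
      case False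
      then show ?thesis
        using less.hyps[of r q] r q by simp
    qed
    have "degree r \<le> degree p" using r less.prems by auto
    then have "lead_coeff q ^ degree p = lead_coeff q ^ (degree p - degree r) * lead_coeff q ^ degree r"
      by (simp add: power_add[symmetric])
    then have "root_resultant q p * lead_coeff q ^ degree r =
        lead_coeff q ^ (degree p - degree r) * root_resultant q r * lead_coeff q ^ degree r"
      using root_resultant_mod[OF q, of p] unfolding r_def[symmetric] by (simp add: mult_ac)
    then have "root_resultant q p = lead_coeff q ^ (degree p - degree r) * root_resultant q r"
      using q by simp
    then show ?thesis
      using resultant_mod[OF less.prems, unfolded r_def[symmetric]] False IH root_resultant_swap[of p q]
      by simp
  qed
qed

lemma resultant_eq_root_resultant:
  fixes p q :: "complex poly"
  assumes "p \<noteq> 0" "q \<noteq> 0"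
  shows "resultant p q = root_resultant p q"
proof (cases "degree q \<le> degree p")
  case True
  then show ?thesis using assms resultant_eq_root_resultant_of_degree_le by blast
next
  case False
  then show ?thesis
    using resultant_eq_root_resultant_of_degree_le[of q p] assms
      resultant_swap[of p q] root_resultant_swap[of p q] by simp
qed

lemma resultant_pderiv_eq_prod_proots:
  fixes p :: "complex poly"
  assumes "degree p \<ge> 1"
  shows "resultant p (pderiv p) = lead_coeff p ^ (degree p - 1) * (\<Prod>a\<in>#proots p. poly (pderiv p) a)"
proof -
  have "p \<noteq> 0" "pderiv p \<noteq> 0" using assms by (auto simp: pderiv_eq_0_iff)
  then show ?thesis
    by (simp add: resultant_eq_root_resultant root_resultant_def degree_pderiv)
qed

section \<open>Reciprocal polynomials\<close>

text \<open>For \<open>u = 1\<close> this is reciprocity \<open>f(X) = X^(2m) f(1/X)\<close>; for \<open>u = -1\<close> it is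
  skew-reciprocity, since \<open>(-1)^(2m(2m-1)/2) = (-1)^m\<close>.\<close>
definition reciprocal :: "'a :: field \<Rightarrow> nat \<Rightarrow> 'a poly \<Rightarrow> bool" where
  "reciprocal u m f \<longleftrightarrow> (\<forall>x. x \<noteq> 0 \<longrightarrow> poly f x = u ^ m * x ^ (2 * m) * poly f (u / x))"

definition reciprocal_lift :: "'a :: field \<Rightarrow> nat \<Rightarrow> 'a poly \<Rightarrow> 'a poly" where
  "reciprocal_lift u m g = (\<Sum>k\<le>m. smult (coeff g k) (monom 1 (m - k) * [:u, 0, 1:] ^ k))"

lemma poly_reciprocal_lift:
  fixes x :: "'a :: field"
  assumes "degree g \<le> m" "x \<noteq> 0"
  shows "poly (reciprocal_lift u m g) x = x ^ m * poly g (x + u / x)"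
proof -
  have "poly (reciprocal_lift u m g) x = (\<Sum>k\<le>m. x ^ m * (coeff g k * (x + u / x) ^ k))"
  proof (unfold reciprocal_lift_def poly_sum, rule sum.cong[OF refl])
    fix k assume "k \<in> {..m}"
    then have "x ^ m = x ^ (m - k) * x ^ k" by (simp add: power_add[symmetric])
    moreover have "u + x * x = x * (x + u / x)" using assms(2) by (simp add: field_simps)
    ultimately show "poly (smult (coeff g k) (monom 1 (m - k) * [:u, 0, 1:] ^ k)) x =
        x ^ m * (coeff g k * (x + u / x) ^ k)"
      by (simp add: poly_monom power_mult_distrib)
  qed
  also have "\<dots> = x ^ m * poly g (x + u / x)"
    by (simp add: sum_distrib_left[symmetric] poly_altdef assms(1) sum.mono_neutral_right coeff_eq_0)
  finally show ?thesis .
qed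

lemma reciprocal_lift_monom:
  "reciprocal_lift u m (monom c m) = smult c ([:u, 0, 1:] ^ m)"
  by (simp add: reciprocal_lift_def coeff_monom if_distrib[of "\<lambda>a. smult a _"] sum.delta'
      cong: if_cong)

lemma (in field_hom) map_poly_reciprocal_lift:
  "map_poly hom (reciprocal_lift u m g) = reciprocal_lift (hom u) m (map_poly hom g)"
proof -
  interpret map_poly_hom: map_poly_idom_hom hom ..
  show ?thesis
    by (simp add: reciprocal_lift_def hom_distribs map_poly_hom_monom)
qed

lemma reciprocal_diff:
  "reciprocal u m f \<Longrightarrow> reciprocal u m g \<Longrightarrow> reciprocal u m (f - g)"
  by (simp add: reciprocal_def algebra_simps)

lemma reciprocal_reciprocal_lift:
  fixes u :: "'a :: field"
  assumes u: "u * u = 1" and g: "degree g \<le> m"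
  shows "reciprocal u m (reciprocal_lift u m g)"
  unfolding reciprocal_def
proof (intro allI impI)
  fix x :: 'a assume x: "x \<noteq> 0"
  have ux: "u / x \<noteq> 0" "u / x + u / (u / x) = x + u / x" using u x by auto
  have "u * x\<^sup>2 * (u / x) = (u * u) * x" using x by (simp add: power2_eq_square)
  then have "u ^ m * x ^ (2 * m) * (u / x) ^ m = x ^ m"
    by (simp add: u power_mult power_mult_distrib[symmetric])
  moreover have "poly (reciprocal_lift u m g) (u / x) = (u / x) ^ m * poly g (x + u / x)"
    using poly_reciprocal_lift[OF g ux(1), of u] unfolding ux(2) .
  ultimately show "poly (reciprocal_lift u m g) x = u ^ m * x ^ (2 * m) * poly (reciprocal_lift u m g) (u / x)"
    using poly_reciprocal_lift[OF g x] by (simp add: mult.assoc[symmetric])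
qed

text \<open>As \<open>f\<close> has no term of degree \<open>2m + 2\<close>, the symmetry kills its constant term.\<close>
lemma reciprocal_Suc_eq_X_mult:
  fixes f :: "'a :: field_char_0 poly"
  assumes u: "u * u = 1" and f: "reciprocal u (Suc m) f" and df: "degree f \<le> 2 * m + 1"
  obtains f' where "f = [:0, 1:] * f'" "degree f' \<le> 2 * m" "reciprocal u m f'"
proof -
  define d where "d = degree f"
  define f' where "f' = smult (u ^ Suc m) (monom 1 (2 * m + 1 - d) * reflect_poly (f \<circ>\<^sub>p [:0, u:]))"
  have u0: "u \<noteq> 0" using u by auto
  have f_eq: "f = [:0, 1:] * f'"
  proof (rule poly_eqI_nonzero)
    fix x :: 'a assume x: "x \<noteq> 0"
    have "degree (f \<circ>\<^sub>p [:0, u:]) = d" unfolding d_def using u0 by (simp add: degree_pcompose)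
    then have "poly (reflect_poly (f \<circ>\<^sub>p [:0, u:])) x = x ^ d * poly f (u / x)"
      using x by (simp add: poly_reflect_poly_nz poly_pcompose divide_inverse mult.commute)
    then have "poly ([:0, 1:] * f') x = u ^ Suc m * (x * x ^ (2 * m + 1 - d) * x ^ d) * poly f (u / x)"
      unfolding f'_def by (simp add: poly_monom mult_ac)
    also have "x * x ^ (2 * m + 1 - d) * x ^ d = x ^ (2 * Suc m)"
      using df unfolding d_def by (simp add: power_add[symmetric] power_Suc[symmetric] del: power_Suc)
    finally show "poly f x = poly ([:0, 1:] * f') x"
      using f x unfolding reciprocal_def by simp
  qed
  moreover have "degree f' \<le> 2 * m"
  proof (cases "f' = 0")
    case False
    then have "degree f = degree f' + 1" by (simp add: f_eq degree_mult_eq)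
    then show ?thesis using df by simp
  qed simp
  moreover have "reciprocal u m f'"
    unfolding reciprocal_def
  proof (intro allI impI)
    fix x :: 'a assume x: "x \<noteq> 0"
    have "x * poly f' x = u ^ Suc m * x ^ (2 * Suc m) * ((u / x) * poly f' (u / x))"
      using f x unfolding reciprocal_def f_eq by simp
    also have "\<dots> = x * ((u * u) * (u ^ m * x ^ (2 * m) * poly f' (u / x)))"
      using x by (simp add: field_simps power_add power_mult)
    finally show "poly f' x = u ^ m * x ^ (2 * m) * poly f' (u / x)"
      using x u by simp
  qed
  ultimately show ?thesis using that by blast
qed

lemma reciprocal_lift_add:
  "reciprocal_lift u m (g + h) = reciprocal_lift u m g + reciprocal_lift u m h"
  by (simp add: reciprocal_lift_def smult_add_left sum.distrib)

lemma reciprocal_lift_Suc: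
  fixes g :: "'a :: field_char_0 poly"
  assumes "degree g \<le> m"
  shows "reciprocal_lift u (Suc m) g = [:0, 1:] * reciprocal_lift u m g"
proof (rule poly_eqI_nonzero)
  fix x :: 'a assume "x \<noteq> 0"
  then show "poly (reciprocal_lift u (Suc m) g) x = poly ([:0, 1:] * reciprocal_lift u m g) x"
    using assms by (simp add: poly_reciprocal_lift)
qed

lemma degree_diff_reciprocal_lift_leading_le:
  fixes f :: "'a :: field poly"
  assumes "degree f \<le> 2 * k"
  shows "degree (f - reciprocal_lift u k (monom (coeff f (2 * k)) k)) \<le> 2 * k - 1"
proof (rule degree_le, intro allI impI)
  define Q where "Q = reciprocal_lift u k (monom (coeff f (2 * k)) k)"
  have "degree ([:u, 0, 1:] ^ k) = 2 * k" "coeff ([:u, 0, 1:] ^ k) (2 * k) = 1"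
    using degree_power_eq[of "[:u, 0, 1:]" k] lead_coeff_power[of "[:u, 0, 1:]" k]
    by (simp_all add: mult_2 mult_2_right)
  then have Q: "degree Q \<le> 2 * k" "coeff Q (2 * k) = coeff f (2 * k)"
    unfolding Q_def reciprocal_lift_monom by simp_all
  fix i assume "2 * k - 1 < i"
  then consider "i = 2 * k" | "i > 2 * k" by fastforce
  then show "coeff (f - Q) i = 0"
    by cases (use Q assms in \<open>simp_all add: coeff_eq_0\<close>)
qed

lemma reciprocal_imp_ex_reciprocal_lift:
  fixes f :: "'a :: field_char_0 poly"
  assumes u: "u * u = 1"
  shows "reciprocal u m f \<Longrightarrow> degree f \<le> 2 * m \<Longrightarrow>
    \<exists>g. degree g \<le> m \<and> f = reciprocal_lift u m g"
proof (induction m arbitrary: f)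
  case 0
  then obtain c where "f = [:c:]" by (metis degree_eq_zeroE le_zero_eq mult_0_right)
  then have "f = reciprocal_lift u 0 f" by (simp add: reciprocal_lift_def)
  then show ?case using 0 by auto
next
  case (Suc m)
  define top where "top = monom (coeff f (2 * Suc m)) (Suc m)"
  have "reciprocal u (Suc m) (f - reciprocal_lift u (Suc m) top)"
    unfolding top_def by (intro reciprocal_diff Suc.prems(1) reciprocal_reciprocal_lift u degree_monom_le)
  moreover have "degree (f - reciprocal_lift u (Suc m) top) \<le> 2 * m + 1"
    using degree_diff_reciprocal_lift_leading_le[OF Suc.prems(2)] unfolding top_def by simp
  ultimately obtain f' where f': "f - reciprocal_lift u (Suc m) top = [:0, 1:] * f'"
    "degree f' \<le> 2 * m" "reciprocal u m f'"
    using reciprocal_Suc_eq_X_mult[OF u] by metis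
  then obtain g where g: "degree g \<le> m" "f' = reciprocal_lift u m g"
    using Suc.IH by blast
  have "f = reciprocal_lift u (Suc m) (g + top)"
    using f'(1) unfolding reciprocal_lift_add reciprocal_lift_Suc[OF g(1)] g(2)
    by (simp add: algebra_simps)
  moreover have "degree (g + top) \<le> Suc m"
    using g(1) unfolding top_def by (intro degree_add_le) (auto simp: degree_monom_le le_SucI)
  ultimately show ?case by blast
qed

section \<open>The discriminant of a reciprocal polynomial\<close>

lemma ex_nonzero_add_divide_eq:
  fixes u b :: complex
  assumes "u \<noteq> 0"
  shows "\<exists>a. a \<noteq> 0 \<and> a + u / a = b"
proof -
  define r where "r = csqrt (b\<^sup>2 - 4 * u)"
  define a where "a = (b + r) / 2"
  have "r * r = b * b - 4 * u" unfolding r_def using power2_csqrt[of "b\<^sup>2 - 4 * u"]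
    by (simp add: power2_eq_square)
  moreover have "a * a - b * a + u = (r * r - (b * b - 4 * u)) / 4"
    unfolding a_def by (simp add: field_simps)
  ultimately have quadratic: "a * a - b * a + u = 0" by simp
  then have "a \<noteq> 0" using assms by auto
  moreover have "a + u / a = b" using quadratic \<open>a \<noteq> 0\<close> by (simp add: field_simps)
  ultimately show ?thesis by blast
qed

lemma lead_coeff_prod_quadratics:
  fixes a c :: "'b \<Rightarrow> 'a :: idom"
  shows "lead_coeff (\<Prod>b\<in>#B. [:- a b, 1:] * [:- c b, 1:]) = 1"
  by (induction B) (simp_all add: lead_coeff_mult del: mult_pCons_left mult_pCons_right)

lemma proots_prod_quadratics:
  fixes a c :: "'b \<Rightarrow> 'a :: idom"
  shows "proots (\<Prod>b\<in>#B. [:- a b, 1:] * [:- c b, 1:]) = (\<Sum>b\<in>#B. {#a b, c b#})"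
proof (induction B)
  case (add x B)
  have "(\<Prod>b\<in>#B. [:- a b, 1:] * [:- c b, 1:]) \<noteq> 0"
    using lead_coeff_prod_quadratics[of a c B] by auto
  moreover have "proots (pCons (- y) 1) = {#y#}" for y :: 'a
    using proots_linear_factor[of "- y"] by (simp add: pCons_one)
  ultimately show ?case
    using add.IH by (simp add: proots_mult del: mult_pCons_left mult_pCons_right)
qed simp

lemma prod_mset_sum_mset_pairs:
  "(\<Prod>x\<in>#(\<Sum>b\<in>#B. {#p b, q b#}). h x) = (\<Prod>b\<in>#B. h (p b) * h (q b))"
  by (induction B) (simp_all add: mult_ac)

lemma reciprocal_lift_eq_smult_prod_proots:
  fixes G :: "complex poly"
  assumes a: "\<And>b. a b \<noteq> 0" "\<And>b. a b + u / a b = b" and G: "degree G \<le> n"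
  shows "reciprocal_lift u n G =
    smult (lead_coeff G) (monom 1 (n - degree G) * (\<Prod>b\<in>#proots G. [:- a b, 1:] * [:- (u / a b), 1:]))"
proof (rule poly_eqI_nonzero)
  fix x :: complex assume x: "x \<noteq> 0"
  have quadratic: "poly ([:- a b, 1:] * [:- (u / a b), 1:]) x = x * (x + u / x - b)" for b
  proof -
    have "poly ([:- a b, 1:] * [:- (u / a b), 1:]) x = (x - a b) * (x - u / a b)"
      by (simp only: poly_mult poly_pCons poly_1) simp
    also have "\<dots> = x * (x + u / x - (a b + u / a b))"
      using a(1)[of b] x by (simp add: algebra_simps diff_divide_distrib)
    finally show ?thesis unfolding a(2) .
  qed
  have prod: "poly (\<Prod>b\<in>#proots G. [:- a b, 1:] * [:- (u / a b), 1:]) x =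
      x ^ degree G * (\<Prod>b\<in>#proots G. x + u / x - b)"
    unfolding poly_prod_mset quadratic
    by (simp only: prod_mset.distrib prod_mset_constant size_proots_complex)
  have powers: "x ^ (n - degree G) * x ^ degree G = x ^ n"
    using G by (simp add: power_add[symmetric])
  have "poly (smult (lead_coeff G) (monom 1 (n - degree G) *
      (\<Prod>b\<in>#proots G. [:- a b, 1:] * [:- (u / a b), 1:]))) x =
      lead_coeff G * ((x ^ (n - degree G) * x ^ degree G) * (\<Prod>b\<in>#proots G. x + u / x - b))"
    unfolding poly_smult poly_mult poly_monom prod by (simp add: mult.assoc)
  also have "\<dots> = x ^ n * poly G (x + u / x)"
    unfolding powers poly_eq_lead_coeff_prod_proots[of G] by (simp only: mult_ac)
  finally show "poly (reciprocal_lift u n G) x = poly (smult (lead_coeff G) (monom 1 (n - degree G) *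
      (\<Prod>b\<in>#proots G. [:- a b, 1:] * [:- (u / a b), 1:]))) x"
    by (simp add: poly_reciprocal_lift[OF G x])
qed

lemma degree_reciprocal_lift:
  fixes G :: "complex poly"
  assumes "u \<noteq> 0" "G \<noteq> 0" "degree G \<le> n"
  shows "degree (reciprocal_lift u n G) = n + degree G"
proof -
  obtain a where a: "\<And>b. a b \<noteq> 0" "\<And>b. a b + u / a b = b"
    using ex_nonzero_add_divide_eq[OF assms(1)] by metis
  define Q where "Q = (\<Prod>b\<in>#proots G. [:- a b, 1:] * [:- (u / a b), 1:])"
  have "Q \<noteq> 0" using lead_coeff_prod_quadratics[of a _ "proots G"] unfolding Q_def by auto
  moreover have "degree Q = 2 * degree G"
    unfolding Q_def size_proots_complex[symmetric] proots_prod_quadratics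
    by (simp add: image_mset.compositionality o_def size_proots_complex)
  ultimately show ?thesis
    using reciprocal_lift_eq_smult_prod_proots[OF a assms(3), folded Q_def] assms
    by (simp add: degree_mult_eq degree_monom_eq)
qed

lemma lead_coeff_reciprocal_lift:
  fixes G :: "complex poly"
  assumes "u \<noteq> 0" "degree G \<le> n"
  shows "lead_coeff (reciprocal_lift u n G) = lead_coeff G"
proof -
  obtain a where a: "\<And>b. a b \<noteq> 0" "\<And>b. a b + u / a b = b"
    using ex_nonzero_add_divide_eq[OF assms(1)] by metis
  show ?thesis
    unfolding reciprocal_lift_eq_smult_prod_proots[OF a assms(2)] lead_coeff_smult lead_coeff_mult
      lead_coeff_monom lead_coeff_prod_quadratics by simp
qed

lemma poly_pderiv_reciprocal_lift:
  fixes G :: "'a :: real_normed_field poly"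
  assumes G: "degree G \<le> n" and x: "x \<noteq> 0" and root: "poly G (x + u / x) = 0"
  shows "poly (pderiv (reciprocal_lift u n G)) x = x ^ n * poly (pderiv G) (x + u / x) * (1 - u / x\<^sup>2)"
proof -
  have "((\<lambda>z. z + u / z) has_field_derivative (1 - u / x\<^sup>2)) (at x)"
    using x by (auto intro!: derivative_eq_intros simp: power2_eq_square field_simps)
  then have "((\<lambda>z. poly G (z + u / z)) has_field_derivative
      poly (pderiv G) (x + u / x) * (1 - u / x\<^sup>2)) (at x)"
    by (rule DERIV_chain'[OF _ poly_DERIV])
  then have "((\<lambda>z. z ^ n * poly G (z + u / z)) has_field_derivative
      x ^ n * poly (pderiv G) (x + u / x) * (1 - u / x\<^sup>2)) (at x)"
    by (rule DERIV_cong[OF DERIV_mult'[OF DERIV_power[OF DERIV_ident]]]) (simp add: root mult_ac)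
  then have "(poly (reciprocal_lift u n G) has_field_derivative
      x ^ n * poly (pderiv G) (x + u / x) * (1 - u / x\<^sup>2)) (at x)"
    by (rule has_field_derivative_transform_within_open[where S = "- {0}"])
      (use x in \<open>auto simp: poly_reciprocal_lift[OF G]\<close>)
  then show ?thesis
    using DERIV_unique[OF poly_DERIV] by blast
qed

lemma pderiv_reciprocal_lift_root_pair:
  fixes G :: "'a :: real_normed_field poly"
  assumes u: "u * u = 1" and G: "degree G \<le> n" and a: "a \<noteq> 0" and root: "poly G (a + u / a) = 0"
  shows "poly (pderiv (reciprocal_lift u n G)) a * poly (pderiv (reciprocal_lift u n G)) (u / a) =
    u ^ Suc n * poly (pderiv G) (a + u / a) ^ 2 * (4 * u - (a + u / a)\<^sup>2)"
proof -
  define b where "b = a + u / a"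
  have u0: "u \<noteq> 0" using u by auto
  have ua: "u / a \<noteq> 0" "u / a + u / (u / a) = b" "a * (u / a) = u"
    using a u0 by (auto simp: b_def)
  have "(1 - u / a\<^sup>2) * (1 - u / (u / a)\<^sup>2) = 2 - u * a\<^sup>2 - u / a\<^sup>2"
  proof -
    have "u / (u / a)\<^sup>2 = u * a\<^sup>2"
      using u a by (simp add: power2_eq_square field_simps)
    then show ?thesis using u a by (simp add: field_simps power2_eq_square)
  qed
  also have "\<dots> = u * (4 * u - b\<^sup>2)"
    using u a unfolding b_def by (simp add: field_simps power2_eq_square)
  finally have factors: "(1 - u / a\<^sup>2) * (1 - u / (u / a)\<^sup>2) = u * (4 * u - b\<^sup>2)" .
  have root': "poly G (u / a + u / (u / a)) = 0" using root unfolding ua(2) b_def .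
  have "poly (pderiv (reciprocal_lift u n G)) a * poly (pderiv (reciprocal_lift u n G)) (u / a) =
      (a * (u / a)) ^ n * poly (pderiv G) b ^ 2 * ((1 - u / a\<^sup>2) * (1 - u / (u / a)\<^sup>2))"
    unfolding poly_pderiv_reciprocal_lift[OF G a root] poly_pderiv_reciprocal_lift[OF G ua(1) root']
      ua(2) b_def[symmetric] power_mult_distrib power2_eq_square[of "poly (pderiv G) b"]
    by (simp only: mult_ac)
  then show ?thesis
    unfolding factors ua(3) b_def[symmetric] by simp
qed

lemma poly_mult_poly_minus_eq_prod_proots:
  fixes G :: "complex poly"
  assumes s: "s * s = u"
  shows "poly G (2 * s) * poly G (- 2 * s) =
    (-1) ^ degree G * lead_coeff G ^ 2 * (\<Prod>b\<in>#proots G. 4 * u - b\<^sup>2)"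
proof -
  have "poly G (2 * s) * poly G (- 2 * s) =
      lead_coeff G ^ 2 * (\<Prod>b\<in>#proots G. (2 * s - b) * (- 2 * s - b))"
    unfolding poly_eq_lead_coeff_prod_proots[of G] by (simp add: prod_mset.distrib power2_eq_square mult_ac)
  also have "(\<Prod>b\<in>#proots G. (2 * s - b) * (- 2 * s - b)) = (\<Prod>b\<in>#proots G. (-1) * (4 * u - b\<^sup>2))"
  proof -
    have "(2 * s - b) * (- 2 * s - b) = (-1) * (4 * u - b\<^sup>2)" for b
      using s[symmetric] by (simp add: algebra_simps power2_eq_square)
    then show ?thesis by (simp only:)
  qed
  also have "\<dots> = (-1) ^ degree G * (\<Prod>b\<in>#proots G. 4 * u - b\<^sup>2)"
    by (simp only: prod_mset.distrib prod_mset_constant size_proots_complex)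
  finally show ?thesis by (simp add: mult_ac)
qed

lemma prod_pderiv_proots_reciprocal_lift:
  fixes G :: "complex poly"
  assumes u: "u * u = 1" and G: "G \<noteq> 0" "degree G = n"
  shows "(\<Prod>x\<in>#proots (reciprocal_lift u n G). poly (pderiv (reciprocal_lift u n G)) x) =
    (\<Prod>b\<in>#proots G. poly (pderiv G) b) ^ 2 * (\<Prod>b\<in>#proots G. 4 * u - b\<^sup>2)"
proof -
  have u0: "u \<noteq> 0" using u by auto
  obtain a where a: "\<And>b. a b \<noteq> 0" "\<And>b. a b + u / a b = b"
    using ex_nonzero_add_divide_eq[OF u0] by metis
  have F: "reciprocal_lift u n G =
      smult (lead_coeff G) (\<Prod>b\<in>#proots G. [:- a b, 1:] * [:- (u / a b), 1:])"
    using reciprocal_lift_eq_smult_prod_proots[OF a, of G n] G by simp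
  have "lead_coeff G \<noteq> 0" using G(1) by simp
  have roots: "proots (reciprocal_lift u n G) = (\<Sum>b\<in>#proots G. {#a b, u / a b#})"
    unfolding F proots_smult[OF \<open>lead_coeff G \<noteq> 0\<close>] proots_prod_quadratics ..
  have "(\<Prod>x\<in>#proots (reciprocal_lift u n G). poly (pderiv (reciprocal_lift u n G)) x) =
      (\<Prod>b\<in>#proots G. u ^ Suc n * poly (pderiv G) b ^ 2 * (4 * u - b\<^sup>2))"
    unfolding roots prod_mset_sum_mset_pairs
  proof (rule arg_cong[where f = prod_mset], rule image_mset_cong)
    fix b assume "b \<in># proots G"
    then have "poly G (a b + u / a b) = 0" using G a(2) by simp
    then show "poly (pderiv (reciprocal_lift u n G)) (a b) * poly (pderiv (reciprocal_lift u n G)) (u / a b) =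
        u ^ Suc n * poly (pderiv G) b ^ 2 * (4 * u - b\<^sup>2)"
      using pderiv_reciprocal_lift_root_pair[OF u _ a(1)] G unfolding a(2) by simp
  qed
  also have "\<dots> = (u ^ Suc n) ^ n *
      (\<Prod>b\<in>#proots G. poly (pderiv G) b) ^ 2 * (\<Prod>b\<in>#proots G. 4 * u - b\<^sup>2)"
    using G by (simp only: prod_mset.distrib prod_mset_constant size_proots_complex power2_eq_square)
  also have "(u ^ Suc n) ^ n = 1"
  proof -
    obtain k where "Suc n * n = 2 * k" by (metis dvd_triv_left even_mult_iff evenE even_Suc)
    then have "(u ^ Suc n) ^ n = (u ^ 2) ^ k" by (simp only: power_mult[symmetric])
    then show ?thesis using u by (simp add: power2_eq_square)
  qed
  finally show ?thesis by simp
qed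

lemma discriminant_reciprocal_lift:
  fixes G :: "complex poly"
  assumes u: "u * u = 1" and s: "s * s = u" and n: "degree G = n" "n \<ge> 1"
  shows "discriminant (reciprocal_lift u n G) = poly G (2 * s) * poly G (- 2 * s) * discriminant G ^ 2"
proof -
  define F where "F = reciprocal_lift u n G"
  define c where "c = lead_coeff G"
  define Pg where "Pg = (\<Prod>b\<in>#proots G. poly (pderiv G) b)"
  define P where "P = (\<Prod>b\<in>#proots G. 4 * u - b\<^sup>2)"
  have u0: "u \<noteq> 0" using u by auto
  have G0: "G \<noteq> 0" and c0: "c \<noteq> 0" using n by (auto simp: c_def)
  have lF: "lead_coeff F = c"
    using lead_coeff_reciprocal_lift[OF u0] n unfolding F_def c_def by simp
  have dF: "degree F = 2 * n"
    using degree_reciprocal_lift[OF u0 G0] n unfolding F_def by simp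
  have "resultant F (pderiv F) = c ^ (2 * n - 1) * (Pg ^ 2 * P)"
    using resultant_pderiv_eq_prod_proots[of F] prod_pderiv_proots_reciprocal_lift[OF u G0 n(1)] dF lF n
    unfolding F_def Pg_def P_def by simp
  moreover have "resultant G (pderiv G) = c ^ (n - 1) * Pg"
    using resultant_pderiv_eq_prod_proots[of G] n unfolding Pg_def c_def by simp
  moreover have "poly G (2 * s) * poly G (- 2 * s) = (-1) ^ n * c ^ 2 * P"
    using poly_mult_poly_minus_eq_prod_proots[OF s, of G] n unfolding P_def c_def by simp
  moreover have "discriminant F = (-1) ^ n * resultant F (pderiv F) / c"
    using lF dF minus_one_power_triangular[where 'a = complex, of n] by (simp add: discriminant_def Let_def)
  moreover have "discriminant G ^ 2 = (resultant G (pderiv G) / c) ^ 2"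
    unfolding discriminant_power2 c_def ..
  moreover obtain k where "n = Suc k" using n by (cases n) auto
  ultimately show ?thesis
    unfolding F_def[symmetric] using c0 by (simp add: field_simps power2_eq_square mult_2 power_mult)
qed

section \<open>Rational reciprocal polynomials\<close>

lemma is_rat_square_mult_power2_iff:
  assumes "r \<noteq> 0"
  shows "is_rat_square (a * r\<^sup>2) \<longleftrightarrow> is_rat_square a"
  unfolding is_rat_square_def
proof
  assume "\<exists>q. a * r\<^sup>2 = q ^ 2"
  then obtain q where "a * r\<^sup>2 = q ^ 2" by blast
  then have "a = (q / r) ^ 2" using assms by (simp add: power_divide field_simps)
  then show "\<exists>q. a = q ^ 2" by blast
next
  assume "\<exists>q. a = q ^ 2"
  then obtain q where "a = q ^ 2" by blast
  then have "a * r\<^sup>2 = (q * r) ^ 2" by (simp add: power_mult_distrib)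
  then show "\<exists>q. a * r\<^sup>2 = q ^ 2" by blast
qed

lemma reciprocal_discriminant_of_rat:
  fixes f :: "rat poly"
  assumes u: "u * u = 1" and f: "reciprocal u n f" "degree f = 2 * n" and n: "n \<ge> 1"
  obtains g where "degree g \<le> n" "f = reciprocal_lift u n g"
    "\<And>s. s * s = of_rat u \<Longrightarrow> (of_rat (discriminant f) :: complex) =
       poly (map_poly of_rat g) (2 * s) * poly (map_poly of_rat g) (- 2 * s) * of_rat (discriminant g) ^ 2"
proof -
  obtain g where g: "degree g \<le> n" "f = reciprocal_lift u n g"
    using reciprocal_imp_ex_reciprocal_lift[OF u f(1)] f(2) by auto
  define G where "G = map_poly (of_rat :: rat \<Rightarrow> complex) g"
  have uc: "of_rat u * of_rat u = (1 :: complex)" using u by (metis of_rat_1 of_rat_mult)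
  have F: "map_poly of_rat f = reciprocal_lift (of_rat u) n G"
    unfolding G_def g(2) by (rule of_rat_hom.map_poly_reciprocal_lift)
  have "g \<noteq> 0" using f(2) g(2) n by (auto simp: reciprocal_lift_def)
  have "2 * n = degree (map_poly (of_rat :: rat \<Rightarrow> complex) f)" using f(2) by simp
  also have "\<dots> = n + degree G"
    unfolding F by (rule degree_reciprocal_lift) (use u \<open>g \<noteq> 0\<close> g(1) in \<open>auto simp: G_def\<close>)
  finally have "degree G = n" by simp
  then have "(of_rat (discriminant f) :: complex) =
      poly G (2 * s) * poly G (- 2 * s) * of_rat (discriminant g) ^ 2" if "s * s = of_rat u" for s
    using discriminant_reciprocal_lift[OF uc that _ n] F
    by (simp add: G_def flip: of_rat_hom.discriminant_map_poly)
  then show ?thesis using that g unfolding G_def by blast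
qed

lemma reciprocal_discriminant_square_iff:
  fixes f :: "rat poly"
  assumes sep: "separable_poly f" and f: "reciprocal 1 n f" "degree f = 2 * n" and n: "n \<ge> 1"
  shows "is_rat_square (discriminant f) \<longleftrightarrow> is_rat_square ((-1) ^ n * poly f 1 * poly f (-1))"
proof -
  obtain g where g: "degree g \<le> n" "f = reciprocal_lift 1 n g" and D:
    "\<And>s. s * s = of_rat 1 \<Longrightarrow> (of_rat (discriminant f) :: complex) =
      poly (map_poly of_rat g) (2 * s) * poly (map_poly of_rat g) (- 2 * s) * of_rat (discriminant g) ^ 2"
    using reciprocal_discriminant_of_rat[OF _ f n] by auto
  have "poly (map_poly of_rat g) (2 :: complex) = of_rat (poly g 2)"
    "poly (map_poly of_rat g) (-2 :: complex) = of_rat (poly g (-2))"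
    using of_rat_hom.poly_map_poly[of g 2] of_rat_hom.poly_map_poly[of g "-2"] by simp_all
  then have "(of_rat (discriminant f) :: complex) = of_rat (poly g 2 * poly g (-2) * discriminant g ^ 2)"
    using D[of 1] by (simp add: of_rat_mult of_rat_power)
  then have disc: "discriminant f = poly g 2 * poly g (-2) * discriminant g ^ 2"
    by (simp only: of_rat_eq_iff)
  have "(-1) ^ n * poly f 1 * poly f (-1) = poly g 2 * poly g (-2)"
    using poly_reciprocal_lift[OF g(1), of 1 1] poly_reciprocal_lift[OF g(1), of "-1" 1] g(2)
    by (simp add: power_mult_distrib[symmetric])
  moreover have "discriminant g \<noteq> 0"
    using disc separable_poly_discriminant_nonzero[OF sep] by auto
  ultimately show ?thesis
    using is_rat_square_mult_power2_iff disc by simp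
qed

lemma skew_reciprocal_discriminant_square_iff:
  fixes f :: "rat poly"
  assumes sep: "separable_poly f" and f: "reciprocal (-1) n f" "degree f = 2 * n" and n: "n \<ge> 1"
  shows "is_rat_square (discriminant f) \<longleftrightarrow>
    (\<exists>q::rat. poly (map_poly of_rat f) \<i> * poly (map_poly of_rat f) (- \<i>) = of_rat (q ^ 2))"
proof -
  obtain g where g: "degree g \<le> n" "f = reciprocal_lift (-1) n g" and D:
    "\<And>s. s * s = of_rat (-1) \<Longrightarrow> (of_rat (discriminant f) :: complex) =
      poly (map_poly of_rat g) (2 * s) * poly (map_poly of_rat g) (- 2 * s) * of_rat (discriminant g) ^ 2"
    using reciprocal_discriminant_of_rat[OF _ f n] by auto
  define G where "G = map_poly (of_rat :: rat \<Rightarrow> complex) g"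
  have F: "map_poly of_rat f = reciprocal_lift (-1) n G"
    unfolding G_def g(2) of_rat_hom.map_poly_reciprocal_lift by simp
  have dG: "degree G \<le> n" using g(1) by (simp add: G_def)
  have "poly (map_poly of_rat f) \<i> = \<i> ^ n * poly G (2 * \<i>)"
    using poly_reciprocal_lift[OF dG, of \<i> "-1"] unfolding F by simp
  moreover have "poly (map_poly of_rat f) (- \<i>) = (- \<i>) ^ n * poly G (- 2 * \<i>)"
    using poly_reciprocal_lift[OF dG, of "- \<i>" "-1"] unfolding F by simp
  ultimately have fi: "poly (map_poly of_rat f) \<i> * poly (map_poly of_rat f) (- \<i>) =
      poly G (2 * \<i>) * poly G (- 2 * \<i>)"
    by (simp add: power_mult_distrib[symmetric])
  have disc_eq: "(of_rat (discriminant f) :: complex) =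
      poly G (2 * \<i>) * poly G (- 2 * \<i>) * of_rat (discriminant g) ^ 2"
    using D[of \<i>] unfolding G_def by simp
  moreover have "discriminant f \<noteq> 0"
    using separable_poly_discriminant_nonzero[OF sep] .
  ultimately have dg: "discriminant g \<noteq> 0" by auto
  define K where "K = discriminant f / discriminant g ^ 2"
  have "poly (map_poly of_rat f) \<i> * poly (map_poly of_rat f) (- \<i>) = of_rat K"
    using disc_eq dg unfolding fi K_def by (simp add: of_rat_divide of_rat_power field_simps)
  moreover have "discriminant f = K * discriminant g ^ 2"
    using dg unfolding K_def by simp
  ultimately show ?thesis
    using is_rat_square_mult_power2_iff[OF dg] by (simp add: is_rat_square_def)
qed

theorem lemma2p2:
  fixes f :: "rat poly" and n :: nat
  assumes sep: "separable_poly f"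
    and deg: "degree f = 2 * n"
    and npos: "n \<ge> 1"
  shows "((\<forall>x::rat. x \<noteq> 0 \<longrightarrow> poly f x = x ^ (2 * n) * poly f (inverse x)) \<longrightarrow>
           (is_rat_square (discriminant f) \<longleftrightarrow>
            is_rat_square ((-1) ^ n * poly f 1 * poly f (-1))))
       \<and> ((\<forall>x::rat. x \<noteq> 0 \<longrightarrow>
             poly f x = (-1) ^ (2 * n * (2 * n - 1) div 2) * x ^ (2 * n) * poly f (- inverse x)) \<longrightarrow>
           (is_rat_square (discriminant f) \<longleftrightarrow>
            (\<exists>q::rat. poly (map_poly of_rat f) \<i> * poly (map_poly of_rat f) (- \<i>) = of_rat (q ^ 2))))"
proof (intro conjI impI)
  assume H: "\<forall>x::rat. x \<noteq> 0 \<longrightarrow> poly f x = x ^ (2 * n) * poly f (inverse x)"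
  have "reciprocal 1 n f"
    unfolding reciprocal_def
  proof (intro allI impI)
    fix x :: rat assume "x \<noteq> 0"
    then show "poly f x = 1 ^ n * x ^ (2 * n) * poly f (1 / x)"
      using H[rule_format, of x] by (simp add: inverse_eq_divide)
  qed
  then show "is_rat_square (discriminant f) \<longleftrightarrow> is_rat_square ((-1) ^ n * poly f 1 * poly f (-1))"
    by (rule reciprocal_discriminant_square_iff[OF sep _ deg npos])
next
  assume H: "\<forall>x::rat. x \<noteq> 0 \<longrightarrow>
    poly f x = (-1) ^ (2 * n * (2 * n - 1) div 2) * x ^ (2 * n) * poly f (- inverse x)"
  have "reciprocal (-1) n f"
    unfolding reciprocal_def
  proof (intro allI impI)
    fix x :: rat assume "x \<noteq> 0"
    then show "poly f x = (-1) ^ n * x ^ (2 * n) * poly f (-1 / x)"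
      using H[rule_format, of x] minus_one_power_triangular[where 'a = rat, of n]
      by (simp add: inverse_eq_divide)
  qed
  then show "is_rat_square (discriminant f) \<longleftrightarrow>
      (\<exists>q::rat. poly (map_poly of_rat f) \<i> * poly (map_poly of_rat f) (- \<i>) = of_rat (q ^ 2))"
    by (rule skew_reciprocal_discriminant_square_iff[OF sep _ deg npos])
qed

end
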